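(* Let $N\ge 2$ and $T\ge 1$ be integers, let $a_1,\ldots,a_N$ be real numbers with $a_1+\cdots+a_N=1$, and let $\mu_1,\ldots,\mu_T$ be real numbers. Let $J$ be the $((N-1)T+1)\times((N-1)T+1)$ real matrix defined as follows (with $e_k$ denoting the $k$-th standard basis row vector of length $(N-1)T+1$): - for $i=1,\ldots,(N-2)T+1$, the $i$-th row of $J$ is $e_{i+T}$; - for $m=1,\ldots,T$, the $((N-2)T+1+m)$-th row of $J$ is $r_m$, where $r_0:=e_{(N-1)T+1}$ and recursively $$r_m=\mu_m\Big(a_1\, r_{m-1}+\sum_{l=2}^{N} a_l\, e_{(N-l)T+m}\Big),\qquad m=1,\ldots,T.$$ Then the eigenvalues of $J$ are precisely the (complex) roots of the polynomial $$p(\lambda)=\lambda^{(N-1)T+1}-(\mu_1\cdots\mu_T)\,\big(a_1\lambda^{N-1}+a_2\lambda^{N-2}+\cdots+a_{N-1}\lambda+a_N\big)^{T}.$$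
   Context: Motivation/setting: for a $C^1$ map $f:\mathbb{R}\to\mathbb{R}$ with a $T$-cycle $x_0^*,\ldots,x_{T-1}^*$ and the delayed feedback control $x(k+1)=f(x(k))+u(k)$, $u(k)=(a_1-1)f(x(k))+a_2f(x(k-T))+\cdots+a_Nf(x(k-(N-1)T))$, define $G:\mathbb{R}^{(N-1)T+1}\to\mathbb{R}^{(N-1)T+1}$ by $G(x_1,\ldots,x_{(N-1)T+1})=(x_2,\ldots,x_{(N-1)T+1},\,a_1f(x_{(N-1)T+1})+a_2f(x_{(N-2)T+1})+\cdots+a_Nf(x_1))$ and $F=G^T$. The matrix $J$ above is the Jacobian of $F$ at the point $(x_0^*,x_1^*,\ldots,x^*_{(N-1)T})$ (indices mod $T$), with $\mu_j$ the derivatives of $f$ along the cycle; however the statement concerns the explicitly defined matrix for arbitrary real $\mu_j$. *)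

theory Defs
  imports Complex_Main "Jordan_Normal_Form.Char_Poly"
begin

text \<open>Rows/columns of matrices are 0-indexed here: the paper's 1-based
  row/column k corresponds to index k-1. The coefficients a and mu keep
  the paper's 1-based indexing (a 1 .. a N, mu 1 .. mu T).\<close>

definition e_row :: "nat \<Rightarrow> nat \<Rightarrow> real" where
  "e_row k j = (if j + 1 = k then 1 else 0)"

fun r_row :: "nat \<Rightarrow> nat \<Rightarrow> (nat \<Rightarrow> real) \<Rightarrow> (nat \<Rightarrow> real) \<Rightarrow> nat \<Rightarrow> nat \<Rightarrow> real" where
  "r_row N T a \<mu> 0 j = e_row ((N - 1) * T + 1) j"
| "r_row N T a \<mu> (Suc m) j =
     \<mu> (Suc m) * (a 1 * r_row N T a \<mu> m j
                   + (\<Sum>l = 2..N. a l * e_row ((N - l) * T + Suc m) j))"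

definition J_mat :: "nat \<Rightarrow> nat \<Rightarrow> (nat \<Rightarrow> real) \<Rightarrow> (nat \<Rightarrow> real) \<Rightarrow> real mat" where
  "J_mat N T a \<mu> = mat ((N - 1) * T + 1) ((N - 1) * T + 1)
     (\<lambda>(i, j). if i + 1 \<le> (N - 2) * T + 1 then e_row (i + 1 + T) j
               else r_row N T a \<mu> (i + 1 - ((N - 2) * T + 1)) j)"

definition p_poly :: "nat \<Rightarrow> nat \<Rightarrow> (nat \<Rightarrow> real) \<Rightarrow> (nat \<Rightarrow> real) \<Rightarrow> real poly" where
  "p_poly N T a \<mu> = monom 1 ((N - 1) * T + 1)
     - Polynomial.smult (\<Prod>m = 1..T. \<mu> m) ((\<Sum>l = 1..N. monom (a l) (N - l)) ^ T)"

end

theory Submission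
  imports Defs
begin

text \<open>By the shift rows of J, an eigenvector v for z satisfies v (k + T) = z * v k, so it is
  determined by its first T entries h through v k = z ^ (k div T) * h (k mod T).  Along such a
  vector each row r_m collapses to \<mu>_m Q(z) h(m - 1), where Q(z) = a_1 z^(N-1) + ... + a_N is weight_poly_eval, and the
  remaining eigen-equations become the recurrence z^(N-1) h(m) = \<mu>_m Q(z) h(m - 1) closed up by
  h(T) = z h(0).  Going once around this cycle shows that it has a nonzero solution exactly when
  z^((N-1)T+1) = \<mu>_1 ... \<mu>_T Q(z)^T, i.e. when p(z) = 0.\<close>

definition cyclic_recurrence :: "nat \<Rightarrow> (nat \<Rightarrow> 'a::field) \<Rightarrow> nat \<Rightarrow> 'a \<Rightarrow> (nat \<Rightarrow> 'a) \<Rightarrow> bool" where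
  "cyclic_recurrence d c T z g \<longleftrightarrow>
     (\<forall>m<T. z ^ d * g (Suc m) = c (Suc m) * g m) \<and> g T = z * g 0"

lemma cyclic_recurrence_prod:
  assumes "cyclic_recurrence d c T z g" and "m \<le> T"
  shows "z ^ (d * m) * g m = (\<Prod>k=1..m. c k) * g 0"
  using assms(2)
proof (induction m)
  case (Suc m)
  have "z ^ (d * Suc m) * g (Suc m) = z ^ (d * m) * (z ^ d * g (Suc m))"
    by (simp add: power_add mult_ac)
  also have "\<dots> = c (Suc m) * (z ^ (d * m) * g m)"
    using assms(1) Suc.prems by (simp add: cyclic_recurrence_def mult_ac)
  also have "\<dots> = (\<Prod>k=1..Suc m. c k) * g 0"
    using Suc by (simp add: prod.nat_ivl_Suc' mult_ac)
  finally show ?case .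
qed simp

lemma cyclic_recurrence_nontrivial_imp:
  assumes "d \<ge> 1" and rec: "cyclic_recurrence d c T z g" and "m0 < T" and "g m0 \<noteq> 0"
  shows "z ^ (d * T + 1) = (\<Prod>k=1..T. c k)"
proof (cases "z = 0")
  case True
  have "c (Suc m0) * g m0 = 0"
    using rec \<open>m0 < T\<close> \<open>d \<ge> 1\<close> True by (simp add: cyclic_recurrence_def zero_power)
  then have "c (Suc m0) = 0" using \<open>g m0 \<noteq> 0\<close> by simp
  then have "(\<Prod>k=1..T. c k) = 0"
    using \<open>m0 < T\<close> by (intro prod_zero) auto
  then show ?thesis using True by simp
next
  case False
  have g0: "g 0 \<noteq> 0"
  proof
    assume "g 0 = 0"
    then have "z ^ (d * m0) * g m0 = 0"
      using cyclic_recurrence_prod[OF rec] \<open>m0 < T\<close> by simp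
    then show False using False \<open>g m0 \<noteq> 0\<close> by simp
  qed
  have "z ^ (d * T + 1) * g 0 = z ^ (d * T) * g T"
    using rec by (simp add: cyclic_recurrence_def mult_ac)
  also have "\<dots> = (\<Prod>k=1..T. c k) * g 0"
    using cyclic_recurrence_prod[OF rec] by simp
  finally show ?thesis using g0 by simp
qed

lemma cyclic_recurrence_nontrivial_exists:
  fixes z :: "'a::field"
  assumes "d \<ge> 1" and "T \<ge> 1" and prod_eq: "z ^ (d * T + 1) = (\<Prod>k=1..T. c k)"
  obtains g where "cyclic_recurrence d c T z g" and "\<exists>m<T. g m \<noteq> 0"
proof (cases "z = 0")
  case True
  then have "(\<Prod>k=1..T. c k) = 0" using prod_eq by simp
  then obtain k where k: "k \<in> {1..T}" "c k = 0" by (auto simp: prod_zero_iff)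
  define g :: "nat \<Rightarrow> 'a" where "g m = (if m = k - 1 then 1 else 0)" for m
  have "cyclic_recurrence d c T z g"
    using k True \<open>d \<ge> 1\<close> by (auto simp: cyclic_recurrence_def g_def zero_power)
  moreover have "g (k - 1) \<noteq> 0" "k - 1 < T" using k by (auto simp: g_def)
  ultimately show ?thesis using that by blast
next
  case False
  define g where "g m = (\<Prod>k=1..m. c k) / z ^ (d * m)" for m
  have "cyclic_recurrence d c T z g"
    unfolding cyclic_recurrence_def
    using False prod_eq[symmetric]
    by (auto simp: g_def prod.nat_ivl_Suc' power_add field_simps)
  moreover have "g 0 \<noteq> 0" by (simp add: g_def)
  ultimately show ?thesis using \<open>T \<ge> 1\<close> by (intro that[of g] exI[of _ 0]) auto
qed

lemma cyclic_recurrence_nontrivial_iff: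
  fixes z :: "'a::field"
  assumes "d \<ge> 1" and "T \<ge> 1"
  shows "(\<exists>g. cyclic_recurrence d c T z g \<and> (\<exists>m<T. g m \<noteq> 0)) \<longleftrightarrow> z ^ (d * T + 1) = (\<Prod>k=1..T. c k)"
  using cyclic_recurrence_nontrivial_imp[OF \<open>d \<ge> 1\<close>] cyclic_recurrence_nontrivial_exists[OF assms]
  by metis

lemma cyclic_recurrence_cong:
  "(\<And>m. m \<le> T \<Longrightarrow> g m = h m) \<Longrightarrow> cyclic_recurrence d c T z g \<longleftrightarrow> cyclic_recurrence d c T z h"
  by (simp add: cyclic_recurrence_def)

lemma pred_mult_eq_add: "N \<ge> 2 \<Longrightarrow> (N - 1) * T = (N - 2) * T + (T::nat)"
proof -
  assume "N \<ge> 2"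
  then have "N - 1 = Suc (N - 2)" by arith
  then show ?thesis by simp
qed

lemma sum_e_row:
  assumes "1 \<le> k" and "k \<le> n"
  shows "(\<Sum>j<n. complex_of_real (e_row k j) * v j) = v (k - 1)"
proof -
  have "(\<Sum>j<n. complex_of_real (e_row k j) * v j) = (\<Sum>j<n. if k - 1 = j then v j else 0)"
    using assms by (intro sum.cong) (auto simp: e_row_def)
  also have "\<dots> = v (k - 1)" using assms by simp
  finally show ?thesis .
qed

definition r_row_dot :: "nat \<Rightarrow> nat \<Rightarrow> (nat \<Rightarrow> real) \<Rightarrow> (nat \<Rightarrow> real) \<Rightarrow> nat \<Rightarrow> (nat \<Rightarrow> complex) \<Rightarrow> complex" where
  "r_row_dot N T a \<mu> m v = (\<Sum>j<(N - 1) * T + 1. complex_of_real (r_row N T a \<mu> m j) * v j)"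

lemma r_row_dot_0: "r_row_dot N T a \<mu> 0 v = v ((N - 1) * T)"
  unfolding r_row_dot_def r_row.simps by (subst sum_e_row) auto

lemma r_row_dot_Suc:
  assumes "N \<ge> 2" and "Suc m \<le> T"
  shows "r_row_dot N T a \<mu> (Suc m) v = of_real (\<mu> (Suc m)) * (of_real (a 1) * r_row_dot N T a \<mu> m v
           + (\<Sum>l=2..N. of_real (a l) * v ((N - l) * T + m)))"
proof -
  let ?n = "(N - 1) * T + 1"
  let ?e = "\<lambda>l j. complex_of_real (e_row ((N - l) * T + Suc m) j)"
  have "r_row_dot N T a \<mu> (Suc m) v = of_real (\<mu> (Suc m)) * (of_real (a 1) * r_row_dot N T a \<mu> m v
      + (\<Sum>j<?n. \<Sum>l=2..N. of_real (a l) * (?e l j * v j)))"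
    unfolding r_row_dot_def
    by (simp add: ring_distribs sum_distrib_left sum_distrib_right sum.distrib mult_ac
             del: sum.lessThan_Suc)
  also have "(\<Sum>j<?n. \<Sum>l=2..N. of_real (a l) * (?e l j * v j))
      = (\<Sum>l=2..N. of_real (a l) * (\<Sum>j<?n. ?e l j * v j))"
    by (subst sum.swap) (simp add: sum_distrib_left del: sum.lessThan_Suc)
  also have "\<dots> = (\<Sum>l=2..N. of_real (a l) * v ((N - l) * T + m))"
  proof (rule sum.cong)
    fix l assume "l \<in> {2..N}"
    then have "(N - l) * T \<le> (N - 2) * T" by (intro mult_le_mono1) auto
    then have "(N - l) * T + Suc m \<le> ?n" using pred_mult_eq_add[OF \<open>N \<ge> 2\<close>, of T] assms(2) by linarith
    then show "of_real (a l) * (\<Sum>j<?n. ?e l j * v j) = of_real (a l) * v ((N - l) * T + m)"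
      by (subst sum_e_row) auto
  qed simp
  finally show ?thesis .
qed

lemma index_J_mult_vec:
  assumes "N \<ge> 2" and "v \<in> carrier_vec ((N - 1) * T + 1)" and "i < (N - 1) * T + 1"
  shows "(map_mat complex_of_real (J_mat N T a \<mu>) *\<^sub>v v) $ i =
    (if i + T < (N - 1) * T + 1 then v $ (i + T) else r_row_dot N T a \<mu> (i - (N - 2) * T) (\<lambda>j. v $ j))"
proof -
  let ?n = "(N - 1) * T + 1"
  have shift_row: "i + 1 \<le> (N - 2) * T + 1 \<longleftrightarrow> i + T < ?n"
    using pred_mult_eq_add[OF assms(1), of T] by linarith
  have "(map_mat complex_of_real (J_mat N T a \<mu>) *\<^sub>v v) $ i
      = (\<Sum>j<?n. complex_of_real (if i + T < ?n then e_row (i + 1 + T) j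
               else r_row N T a \<mu> (i - (N - 2) * T) j) * v $ j)"
    using assms(2,3) shift_row
    by (auto simp: J_mat_def scalar_prod_def atLeast0LessThan intro!: sum.cong)
  also have "\<dots> = (if i + T < ?n then v $ (i + T) else r_row_dot N T a \<mu> (i - (N - 2) * T) (\<lambda>j. v $ j))"
    using shift_row by (auto simp: r_row_dot_def sum_e_row simp del: sum.lessThan_Suc)
  finally show ?thesis .
qed

definition J_eigen_equations :: "nat \<Rightarrow> nat \<Rightarrow> (nat \<Rightarrow> real) \<Rightarrow> (nat \<Rightarrow> real) \<Rightarrow> complex \<Rightarrow> (nat \<Rightarrow> complex) \<Rightarrow> bool" where
  "J_eigen_equations N T a \<mu> z v \<longleftrightarrow>
     (\<forall>i. i + T < (N - 1) * T + 1 \<longrightarrow> v (i + T) = z * v i) \<and>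
     (\<forall>m\<in>{1..T}. r_row_dot N T a \<mu> m v = z * v ((N - 2) * T + m))"

lemma J_mult_vec_eq_smult_iff:
  assumes "N \<ge> 2" and v: "v \<in> carrier_vec ((N - 1) * T + 1)"
  shows "map_mat complex_of_real (J_mat N T a \<mu>) *\<^sub>v v = z \<cdot>\<^sub>v v \<longleftrightarrow> J_eigen_equations N T a \<mu> z (\<lambda>j. v $ j)"
    (is "?M *\<^sub>v v = _ \<longleftrightarrow> _")
proof -
  let ?n = "(N - 1) * T + 1"
  have nT: "(N - 1) * T = (N - 2) * T + T" using pred_mult_eq_add[OF assms(1)] .
  have "?M *\<^sub>v v = z \<cdot>\<^sub>v v \<longleftrightarrow> (\<forall>i<?n. (?M *\<^sub>v v) $ i = z * v $ i)"
    using v by (auto simp: vec_eq_iff J_mat_def)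
  also have "\<dots> \<longleftrightarrow> (\<forall>i<?n. (if i + T < ?n then v $ (i + T) else r_row_dot N T a \<mu> (i - (N - 2) * T) (\<lambda>j. v $ j)) = z * v $ i)"
    using index_J_mult_vec[OF assms] by simp
  also have "\<dots> \<longleftrightarrow> (\<forall>i. i + T < ?n \<longrightarrow> v $ (i + T) = z * v $ i) \<and>
      (\<forall>i<?n. \<not> i + T < ?n \<longrightarrow> r_row_dot N T a \<mu> (i - (N - 2) * T) (\<lambda>j. v $ j) = z * v $ i)"
    by (auto simp: if_split_mem2)
  also have "\<dots> \<longleftrightarrow> J_eigen_equations N T a \<mu> z (\<lambda>j. v $ j)"
  proof -
    have reindex: "(\<forall>i<?n. \<not> i + T < ?n \<longrightarrow> P (i - (N - 2) * T) i) \<longleftrightarrow> (\<forall>m\<in>{1..T}. P m ((N - 2) * T + m))"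
      for P :: "nat \<Rightarrow> nat \<Rightarrow> bool"
    proof safe
      fix m assume "\<forall>i<?n. \<not> i + T < ?n \<longrightarrow> P (i - (N - 2) * T) i" and "m \<in> {1..T}"
      then show "P m ((N - 2) * T + m)"
        using nT by (auto dest!: spec[of _ "(N - 2) * T + m"])
    next
      fix i assume "\<forall>m\<in>{1..T}. P m ((N - 2) * T + m)" and "i < ?n" "\<not> i + T < ?n"
      then show "P (i - (N - 2) * T) i"
        using nT by (auto dest!: bspec[of _ _ "i - (N - 2) * T"])
    qed
    show ?thesis
      unfolding J_eigen_equations_def
      using reindex[of "\<lambda>m i. r_row_dot N T a \<mu> m (\<lambda>j. v $ j) = z * v $ i"] by simp
  qed
  finally show ?thesis .
qed

lemma shift_eq_iff_block_form:
  fixes v :: "nat \<Rightarrow> 'a::comm_semiring_1"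
  assumes "T \<ge> 1"
  shows "(\<forall>i. i + T < K \<longrightarrow> v (i + T) = z * v i) \<longleftrightarrow> (\<forall>k<K. v k = z ^ (k div T) * v (k mod T))"
proof
  assume shift: "\<forall>i. i + T < K \<longrightarrow> v (i + T) = z * v i"
  show "\<forall>k<K. v k = z ^ (k div T) * v (k mod T)"
  proof (intro allI impI)
    fix k assume "k < K"
    then show "v k = z ^ (k div T) * v (k mod T)"
    proof (induction k rule: less_induct)
      case (less k)
      show ?case
      proof (cases "k < T")
        case False
        then obtain i where k: "k = i + T" by (metis add.commute le_add_diff_inverse not_less)
        have "v i = z ^ (i div T) * v (i mod T)"
          by (rule less.IH) (use k less.prems assms in auto)
        then show ?thesis using shift less.prems k assms by (simp add: mult.assoc)
      qed simp
    qed
  qed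
next
  assume block: "\<forall>k<K. v k = z ^ (k div T) * v (k mod T)"
  show "\<forall>i. i + T < K \<longrightarrow> v (i + T) = z * v i"
  proof (intro allI impI)
    fix i assume "i + T < K"
    then have "i < K" by simp
    have "v (i + T) = z ^ ((i + T) div T) * v ((i + T) mod T)" "v i = z ^ (i div T) * v (i mod T)"
      using block \<open>i + T < K\<close> \<open>i < K\<close> by blast+
    then show "v (i + T) = z * v i" using assms by (simp add: mult.assoc)
  qed
qed

lemma block_form_apply:
  assumes "\<forall>k<K. v k = z ^ (k div T) * v (k mod T)" and "m < T" and "q * T + m < K"
  shows "v (q * T + m) = z ^ q * v m"
proof -
  have "v (q * T + m) = z ^ ((q * T + m) div T) * v ((q * T + m) mod T)"
    using assms(1,3) by blast
  then show ?thesis using assms(2) by simp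
qed

definition weight_poly_eval :: "nat \<Rightarrow> (nat \<Rightarrow> real) \<Rightarrow> complex \<Rightarrow> complex" where
  "weight_poly_eval N a z = (\<Sum>l=1..N. complex_of_real (a l) * z ^ (N - l))"

lemma r_row_dot_Suc_block_form:
  assumes "N \<ge> 2" and "m < T"
    and block: "\<forall>k<(N - 1) * T + 1. v k = z ^ (k div T) * v (k mod T)"
    and row: "r_row_dot N T a \<mu> m v = z ^ (N - 1) * v m"
  shows "r_row_dot N T a \<mu> (Suc m) v = of_real (\<mu> (Suc m)) * weight_poly_eval N a z * v m"
proof -
  have "v ((N - l) * T + m) = z ^ (N - l) * v m" if "l \<in> {2..N}" for l
  proof (rule block_form_apply[OF block \<open>m < T\<close>])
    have "(N - l) * T \<le> (N - 2) * T" using that by (intro mult_le_mono1) auto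
    then show "(N - l) * T + m < (N - 1) * T + 1"
      using pred_mult_eq_add[OF \<open>N \<ge> 2\<close>, of T] \<open>m < T\<close> by linarith
  qed
  then have "r_row_dot N T a \<mu> (Suc m) v = of_real (\<mu> (Suc m)) * (of_real (a 1) * (z ^ (N - 1) * v m)
      + (\<Sum>l=2..N. of_real (a l) * (z ^ (N - l) * v m)))"
    using r_row_dot_Suc[OF \<open>N \<ge> 2\<close>, of m T] \<open>m < T\<close> row by simp
  also have "\<dots> = of_real (\<mu> (Suc m)) * weight_poly_eval N a z * v m"
  proof -
    have "{1..N} = insert 1 {2..N}" using \<open>N \<ge> 2\<close> by auto
    then show ?thesis
      by (simp add: weight_poly_eval_def algebra_simps sum_distrib_left sum_distrib_right)
  qed
  finally show ?thesis .
qed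

lemma row_equations_iff_cyclic_recurrence:
  assumes "N \<ge> 2" and "T \<ge> 1"
    and block: "\<forall>k<(N - 1) * T + 1. v k = z ^ (k div T) * v (k mod T)"
  shows "(\<forall>m\<in>{1..T}. r_row_dot N T a \<mu> m v = z * v ((N - 2) * T + m)) \<longleftrightarrow>
    cyclic_recurrence (N - 1) (\<lambda>k. of_real (\<mu> k) * weight_poly_eval N a z) T z
      (\<lambda>m. if m < T then v m else z * v 0)"
    (is "_ \<longleftrightarrow> cyclic_recurrence _ ?c _ _ ?g")
proof -
  have nT: "(N - 1) * T = (N - 2) * T + T" using pred_mult_eq_add[OF \<open>N \<ge> 2\<close>] .
  have last: "v ((N - 1) * T) = z ^ (N - 1) * v 0"
    using block_form_apply[OF block, of 0 "N - 1"] \<open>T \<ge> 1\<close> by simp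
  have target: "z * v ((N - 2) * T + m) = z ^ (N - 1) * ?g m" if "m \<in> {1..T}" for m
  proof (cases "m < T")
    case True
    have "z * z ^ (N - 2) = z ^ (N - 1)"
      using \<open>N \<ge> 2\<close> by (simp flip: power_Suc add: Suc_diff_Suc numeral_2_eq_2)
    then show ?thesis
      using True block_form_apply[OF block True, of "N - 2"] nT by (simp add: mult.assoc[symmetric])
  next
    case False
    then show ?thesis using that last nT by (simp add: mult_ac)
  qed
  have row0: "r_row_dot N T a \<mu> 0 v = z ^ (N - 1) * ?g 0"
    using r_row_dot_0 last \<open>T \<ge> 1\<close> by simp
  have "(\<forall>m\<in>{1..T}. r_row_dot N T a \<mu> m v = z * v ((N - 2) * T + m)) \<longleftrightarrow>
      (\<forall>m\<le>T. r_row_dot N T a \<mu> m v = z ^ (N - 1) * ?g m)"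
    using target row0 by (auto simp: Suc_le_eq)
  also have "\<dots> \<longleftrightarrow> (\<forall>m<T. z ^ (N - 1) * ?g (Suc m) = ?c (Suc m) * ?g m)"
  proof safe
    fix m assume rows: "\<forall>m\<le>T. r_row_dot N T a \<mu> m v = z ^ (N - 1) * ?g m" and "m < T"
    then have "r_row_dot N T a \<mu> m v = z ^ (N - 1) * v m" by simp
    from r_row_dot_Suc_block_form[OF \<open>N \<ge> 2\<close> \<open>m < T\<close> block this]
    show "z ^ (N - 1) * ?g (Suc m) = ?c (Suc m) * ?g m"
      using rows \<open>m < T\<close> by (simp add: Suc_le_eq)
  next
    fix m assume rec: "\<forall>m<T. z ^ (N - 1) * ?g (Suc m) = ?c (Suc m) * ?g m" and "m \<le> T"
    then show "r_row_dot N T a \<mu> m v = z ^ (N - 1) * ?g m"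
    proof (induction m)
      case (Suc m)
      then have "r_row_dot N T a \<mu> m v = z ^ (N - 1) * v m" by simp
      from r_row_dot_Suc_block_form[OF \<open>N \<ge> 2\<close> _ block this] Suc.prems rec
      show ?case by simp
    qed (use row0 in simp)
  qed
  also have "\<dots> \<longleftrightarrow> cyclic_recurrence (N - 1) ?c T z ?g"
    using \<open>T \<ge> 1\<close> by (simp add: cyclic_recurrence_def)
  finally show ?thesis .
qed

lemma J_eigen_equations_iff:
  assumes "N \<ge> 2" and "T \<ge> 1"
  shows "J_eigen_equations N T a \<mu> z v \<longleftrightarrow>
    (\<forall>k<(N - 1) * T + 1. v k = z ^ (k div T) * v (k mod T)) \<and>
    cyclic_recurrence (N - 1) (\<lambda>k. of_real (\<mu> k) * weight_poly_eval N a z) T z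
      (\<lambda>m. if m < T then v m else z * v 0)"
  unfolding J_eigen_equations_def shift_eq_iff_block_form[OF \<open>T \<ge> 1\<close>]
  using row_equations_iff_cyclic_recurrence[OF assms] by blast

lemma eigenvalue_J_iff_cyclic_recurrence:
  assumes "N \<ge> 2" and "T \<ge> 1"
  shows "eigenvalue (map_mat complex_of_real (J_mat N T a \<mu>)) z \<longleftrightarrow>
    (\<exists>g. cyclic_recurrence (N - 1) (\<lambda>k. of_real (\<mu> k) * weight_poly_eval N a z) T z g \<and> (\<exists>m<T. g m \<noteq> 0))"
    (is "eigenvalue ?M z \<longleftrightarrow> (\<exists>g. cyclic_recurrence _ ?c _ _ g \<and> _)")
proof -
  let ?n = "(N - 1) * T + 1"
  have dim: "dim_row ?M = ?n" by (simp add: J_mat_def)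
  have "T \<le> ?n" using pred_mult_eq_add[OF \<open>N \<ge> 2\<close>, of T] by linarith
  show ?thesis
  proof
    assume "eigenvalue ?M z"
    then obtain v where v: "v \<in> carrier_vec ?n" "v \<noteq> 0\<^sub>v ?n" and eq: "?M *\<^sub>v v = z \<cdot>\<^sub>v v"
      unfolding eigenvalue_def eigenvector_def dim by blast
    then have block: "\<forall>k<?n. v $ k = z ^ (k div T) * v $ (k mod T)"
      and rec: "cyclic_recurrence (N - 1) ?c T z (\<lambda>m. if m < T then v $ m else z * v $ 0)"
      using J_mult_vec_eq_smult_iff[OF \<open>N \<ge> 2\<close> v(1)] J_eigen_equations_iff[OF assms] by blast+
    obtain k where "k < ?n" "v $ k \<noteq> 0"
      using v by (metis carrier_vecD eq_vecI index_zero_vec)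
    then have "v $ (k mod T) \<noteq> 0" "k mod T < T"
      using block[rule_format, OF \<open>k < ?n\<close>] \<open>T \<ge> 1\<close> by auto
    then show "\<exists>g. cyclic_recurrence (N - 1) ?c T z g \<and> (\<exists>m<T. g m \<noteq> 0)"
      using rec by (intro exI[of _ "\<lambda>m. if m < T then v $ m else z * v $ 0"]) auto
  next
    assume "\<exists>g. cyclic_recurrence (N - 1) ?c T z g \<and> (\<exists>m<T. g m \<noteq> 0)"
    then obtain g m0 where rec: "cyclic_recurrence (N - 1) ?c T z g" and "m0 < T" "g m0 \<noteq> 0"
      by blast
    define v where "v = vec ?n (\<lambda>k. z ^ (k div T) * g (k mod T))"
    have v: "v \<in> carrier_vec ?n" by (simp add: v_def)
    have v_low: "v $ m = g m" if "m < T" for m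
      using that \<open>T \<le> ?n\<close> by (simp add: v_def)
    have block: "\<forall>k<?n. v $ k = z ^ (k div T) * v $ (k mod T)"
      using v_low \<open>T \<ge> 1\<close> by (simp add: v_def)
    have "cyclic_recurrence (N - 1) ?c T z (\<lambda>m. if m < T then v $ m else z * v $ 0)"
      using rec v_low \<open>T \<ge> 1\<close>
      by (subst cyclic_recurrence_cong[where h = g]) (auto simp: cyclic_recurrence_def)
    then have "J_eigen_equations N T a \<mu> z (\<lambda>j. v $ j)"
      using J_eigen_equations_iff[OF assms] block by blast
    then have "?M *\<^sub>v v = z \<cdot>\<^sub>v v"
      using J_mult_vec_eq_smult_iff[OF \<open>N \<ge> 2\<close> v] by blast
    moreover have "v \<noteq> 0\<^sub>v ?n"
      using v_low[OF \<open>m0 < T\<close>] \<open>g m0 \<noteq> 0\<close> \<open>m0 < T\<close> \<open>T \<le> ?n\<close>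
      by (metis index_zero_vec(1) less_le_trans)
    ultimately show "eigenvalue ?M z"
      unfolding eigenvalue_def eigenvector_def dim using v by blast
  qed
qed

lemma poly_p_poly:
  "poly (map_poly complex_of_real (p_poly N T a \<mu>)) z
     = z ^ ((N - 1) * T + 1) - (\<Prod>k=1..T. of_real (\<mu> k) * weight_poly_eval N a z)"
proof -
  interpret of_real_poly: map_poly_comm_ring_hom complex_of_real ..
  show ?thesis
    by (simp add: p_poly_def weight_poly_eval_def of_real_poly.hom_minus of_real_poly.hom_power
        of_real_poly.hom_sum map_poly_smult poly_monom poly_sum map_poly_monom prod.distrib)
qed

theorem lemma1:
  fixes N T :: nat and a \<mu> :: "nat \<Rightarrow> real"
  assumes "N \<ge> 2" and "T \<ge> 1"
    and "(\<Sum>l = 1..N. a l) = 1"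
  shows "\<forall>z::complex.
           eigenvalue (map_mat complex_of_real (J_mat N T a \<mu>)) z
           \<longleftrightarrow> poly (map_poly complex_of_real (p_poly N T a \<mu>)) z = 0"
proof
  fix z :: complex
  have "N - 1 \<ge> 1" using \<open>N \<ge> 2\<close> by simp
  show "eigenvalue (map_mat complex_of_real (J_mat N T a \<mu>)) z
      \<longleftrightarrow> poly (map_poly complex_of_real (p_poly N T a \<mu>)) z = 0"
    unfolding eigenvalue_J_iff_cyclic_recurrence[OF assms(1,2)]
      cyclic_recurrence_nontrivial_iff[OF \<open>N - 1 \<ge> 1\<close> \<open>T \<ge> 1\<close>] poly_p_poly
    by simp
qed

end
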